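(* Let $\mathfrak g=\mathfrak r_3$, the Lie algebra with basis $\{e_1,e_2,e_3\}$ and nonzero brackets $[e_1,e_2]=e_2+e_3$, $[e_1,e_3]=e_3$, identified with $\mathbb R^3$ via this basis. Then $$U=\left\{\begin{pmatrix}1&0&0\\0&1&0\\0&0&1/\lambda\end{pmatrix}:\lambda>0\right\}$$ is a set of representatives of $\mathcal{PM}(\mathfrak g)$.
   Context: $\mathcal M(\mathfrak g)$ is the set of inner products on $\mathfrak g\cong\mathbb R^3$, with $\mathrm{GL}_3(\mathbb R)$-action $g.\langle\cdot,\cdot\rangle=\langle g^{-1}\cdot,g^{-1}\cdot\rangle$; $\langle\cdot,\cdot\rangle_0$ makes $\{e_1,e_2,e_3\}$ orthonormal. Two inner products are isometric up to scaling if $\langle\cdot,\cdot\rangle_1=k\langle f\cdot,f\cdot\rangle_2$ for some $k>0$ and Lie algebra automorphism $f$; $[\langle\cdot,\cdot\rangle]$ denotes the equivalence class and $\mathcal{PM}(\mathfrak g)$ the set of classes. A subset $U\subset\mathrm{GL}_3(\mathbb R)$ is a set of representatives of $\mathcal{PM}(\mathfrak g)$ if $\mathcal{PM}(\mathfrak g)=\{[h.\langle\cdot,\cdot\rangle_0]: h\in U\}$. *)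

theory Defs
  imports "HOL-Analysis.Analysis"
begin

definition e1 :: "real^3" where "e1 = axis 1 1"
definition e2 :: "real^3" where "e2 = axis 2 1"
definition e3 :: "real^3" where "e3 = axis 3 1"

abbreviation c1 :: "real^3 \<Rightarrow> real" where "c1 x \<equiv> x $ 1"
abbreviation c2 :: "real^3 \<Rightarrow> real" where "c2 x \<equiv> x $ 2"
abbreviation c3 :: "real^3 \<Rightarrow> real" where "c3 x \<equiv> x $ 3"

text \<open>The bilinear, antisymmetric extension of \<open>[e1,e2] = e2 + e3\<close>, \<open>[e1,e3] = e3\<close>,
  \<open>[e2,e3] = 0\<close>.\<close>
definition r3_bracket :: "real^3 \<Rightarrow> real^3 \<Rightarrow> real^3" where
  "r3_bracket x y =
     (c1 x * c2 y - c2 x * c1 y) *\<^sub>R (e2 + e3) + (c1 x * c3 y - c3 x * c1 y) *\<^sub>R e3"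

definition r3_aut :: "(real^3 \<Rightarrow> real^3) \<Rightarrow> bool" where
  "r3_aut f \<longleftrightarrow> linear f \<and> bij f \<and> (\<forall>x y. f (r3_bracket x y) = r3_bracket (f x) (f y))"

definition is_inner_prod :: "(real^3 \<Rightarrow> real^3 \<Rightarrow> real) \<Rightarrow> bool" where
  "is_inner_prod B \<longleftrightarrow> bilinear B \<and> (\<forall>x y. B x y = B y x) \<and> (\<forall>x. x \<noteq> 0 \<longrightarrow> B x x > 0)"

definition ip0 :: "real^3 \<Rightarrow> real^3 \<Rightarrow> real" where
  "ip0 x y = x \<bullet> y"

definition gl_act :: "real^3^3 \<Rightarrow> (real^3 \<Rightarrow> real^3 \<Rightarrow> real) \<Rightarrow> (real^3 \<Rightarrow> real^3 \<Rightarrow> real)" where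
  "gl_act g B = (\<lambda>x y. B (matrix_inv g *v x) (matrix_inv g *v y))"

definition iso_scale :: "(real^3 \<Rightarrow> real^3 \<Rightarrow> real) \<Rightarrow> (real^3 \<Rightarrow> real^3 \<Rightarrow> real) \<Rightarrow> bool" where
  "iso_scale B1 B2 \<longleftrightarrow> (\<exists>k>0. \<exists>f. r3_aut f \<and> (\<forall>x y. B1 x y = k * B2 (f x) (f y)))"

definition ip_class :: "(real^3 \<Rightarrow> real^3 \<Rightarrow> real) \<Rightarrow> (real^3 \<Rightarrow> real^3 \<Rightarrow> real) set" where
  "ip_class B = {B'. is_inner_prod B' \<and> iso_scale B' B}"

definition PM :: "(real^3 \<Rightarrow> real^3 \<Rightarrow> real) set set" where
  "PM = {ip_class B | B. is_inner_prod B}"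

definition is_set_of_reps :: "(real^3^3) set \<Rightarrow> bool" where
  "is_set_of_reps U \<longleftrightarrow> U \<subseteq> {g. invertible g} \<and> PM = (\<lambda>h. ip_class (gl_act h ip0)) ` U"

definition U_r3 :: "(real^3^3) set" where
  "U_r3 = {(\<chi> i j. if i = j then (if i = 3 then 1 / lam else 1) else 0) | lam::real. lam > 0}"

end

theory Submission
  imports Defs
begin

text \<open>Completing squares along the flag \<open>\<langle>e3\<rangle> \<subset> \<langle>e2, e3\<rangle>\<close> writes an inner product as
  \<open>d1 x1 y1 + d2 (x2 + m x1)(y2 + m y1) + d3 (x3 + p x2 + q x1)(y3 + p y2 + q y1)\<close> with
  \<open>d1, d2, d3 > 0\<close>. For \<open>a \<noteq> 0\<close> the lower triangular map
  \<open>x \<mapsto> (x1, a (x2 + m x1), a (x3 + p x2 + q x1))\<close> is an automorphism of \<open>\<frak>r_3\<close>: it preserves the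
  abelian ideal \<open>\<langle>e2, e3\<rangle>\<close>, on which it is a linear combination of the identity and \<open>ad e1\<close>, and
  it fixes \<open>e1\<close> modulo this ideal. Taking \<open>a = \<surd>(d2/d1)\<close> turns the form into \<open>d1\<close> times
  \<open>diag(1, 1, \<lambda>\<^sup>2)\<close> with \<open>\<lambda> = \<surd>(d3/d2)\<close>, which is the action of \<open>diag(1, 1, 1/\<lambda>)\<close> on
  \<open>\<langle>\<cdot>,\<cdot>\<rangle>\<^sub>0\<close>.\<close>

lemma matrix_inv_unique:
  fixes A :: "'a::semiring_1^'n^'m" and H :: "'a^'m^'n"
  assumes "A ** H = mat 1" "H ** A = mat 1"
  shows "matrix_inv A = H"
proof -
  let ?M = "matrix_inv A"
  have M: "A ** ?M = mat 1 \<and> ?M ** A = mat 1"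
    unfolding matrix_inv_def using someI_ex[of "\<lambda>A'. A ** A' = mat 1 \<and> A' ** A = mat 1"] assms
    by blast
  have "?M = ?M ** (A ** H)"
    using assms by (simp add: matrix_mul_rid)
  also have "\<dots> = (?M ** A) ** H"
    by (simp add: matrix_mul_assoc)
  also have "\<dots> = H"
    using M by (simp add: matrix_mul_lid)
  finally show ?thesis .
qed

lemma bilinear_axis_expansion:
  fixes B :: "real^'n \<Rightarrow> real^'n \<Rightarrow> real"
  assumes "bilinear B"
  shows "B x y = (\<Sum>i\<in>UNIV. \<Sum>j\<in>UNIV. x$i * y$j * B (axis i 1) (axis j 1))"
proof -
  have "B x y = B (\<Sum>i\<in>UNIV. x$i *\<^sub>R axis i 1) (\<Sum>j\<in>UNIV. y$j *\<^sub>R axis j 1)"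
    using basis_expansion[of x] basis_expansion[of y] by (simp add: scalar_mult_eq_scaleR)
  also have "\<dots> = (\<Sum>(i,j)\<in>UNIV \<times> UNIV. x$i * y$j * B (axis i 1) (axis j 1))"
    by (simp add: bilinear_sum[OF assms] bilinear_lmul[OF assms] bilinear_rmul[OF assms]
        mult.left_commute mult.assoc case_prod_unfold)
  finally show ?thesis
    by (simp add: sum.cartesian_product)
qed

lemma r3_aut_inv:
  assumes "r3_aut f"
  shows "r3_aut (inv f)"
proof -
  have lin: "linear f" and bij: "bij f" and hom: "\<And>x y. f (r3_bracket x y) = r3_bracket (f x) (f y)"
    using assms by (auto simp: r3_aut_def)
  have "inv f (r3_bracket x y) = r3_bracket (inv f x) (inv f y)" for x y
  proof -
    have "r3_bracket x y = f (r3_bracket (inv f x) (inv f y))"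
      using bij by (simp add: hom bij_is_surj surj_f_inv_f)
    then show ?thesis
      using bij by (simp add: bij_is_inj)
  qed
  then show ?thesis
    using lin bij by (simp add: r3_aut_def bij_is_inj inj_linear_imp_inv_linear bij_imp_bij_inv)
qed

lemma r3_aut_comp:
  assumes "r3_aut f" "r3_aut g"
  shows "r3_aut (g \<circ> f)"
  using assms by (auto simp: r3_aut_def linear_compose bij_comp)

lemma iso_scale_sym:
  assumes "iso_scale B1 B2"
  shows "iso_scale B2 B1"
proof -
  obtain k f where k: "k > 0" and f: "r3_aut f" and B1: "\<And>x y. B1 x y = k * B2 (f x) (f y)"
    using assms by (auto simp: iso_scale_def)
  have "surj f"
    using f by (simp add: r3_aut_def bij_is_surj)
  then have "B2 x y = (1/k) * B1 (inv f x) (inv f y)" for x y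
    using k by (simp add: B1 surj_f_inv_f)
  then show ?thesis
    unfolding iso_scale_def using k r3_aut_inv[OF f] by (intro exI[of _ "1/k"]) auto
qed

lemma iso_scale_trans:
  assumes "iso_scale B1 B2" "iso_scale B2 B3"
  shows "iso_scale B1 B3"
proof -
  obtain k f where "k > 0" "r3_aut f" "\<And>x y. B1 x y = k * B2 (f x) (f y)"
    using assms(1) by (auto simp: iso_scale_def)
  moreover obtain k' g where "k' > 0" "r3_aut g" "\<And>x y. B2 x y = k' * B3 (g x) (g y)"
    using assms(2) by (auto simp: iso_scale_def)
  ultimately show ?thesis
    unfolding iso_scale_def using r3_aut_comp
    by (intro exI[of _ "k * k'"] conjI exI[of _ "g \<circ> f"]) auto
qed

lemma ip_class_eq:
  assumes "iso_scale B B'"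
  shows "ip_class B = ip_class B'"
  unfolding ip_class_def using assms iso_scale_trans iso_scale_sym by blast

definition r3_shear :: "real \<Rightarrow> real \<Rightarrow> real \<Rightarrow> real \<Rightarrow> real^3 \<Rightarrow> real^3" where
  "r3_shear a m p q x = vector [x$1, a * (x$2 + m * x$1), a * (x$3 + p * x$2 + q * x$1)]"

lemma r3_aut_shear:
  assumes "a \<noteq> 0"
  shows "r3_aut (r3_shear a m p q)"
proof -
  let ?f = "r3_shear a m p q"
  let ?g = "\<lambda>y::real^3. vector [y$1, y$2/a - m * y$1, y$3/a - p * (y$2/a - m * y$1) - q * y$1] :: real^3"
  have "linear ?f"
    unfolding r3_shear_def by (intro linearI) (simp_all add: vec_eq_iff forall_3 algebra_simps)
  moreover have "bij ?f"
    by (rule o_bij[of ?g]) (use assms in \<open>auto simp: r3_shear_def vec_eq_iff forall_3 field_simps\<close>)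
  moreover have "?f (r3_bracket x y) = r3_bracket (?f x) (?f y)" for x y
    by (simp add: r3_shear_def r3_bracket_def e1_def e2_def e3_def vec_eq_iff forall_3 axis_def
        algebra_simps)
  ultimately show ?thesis
    by (simp add: r3_aut_def)
qed

definition diag_rep :: "real \<Rightarrow> real^3^3" where
  "diag_rep lam = (\<chi> i j. if i = j then (if i = 3 then 1 / lam else 1) else 0)"

lemma U_r3_eq: "U_r3 = diag_rep ` {lam. lam > 0}"
  unfolding U_r3_def diag_rep_def by auto

lemma diag_rep_inverse:
  assumes "lam > 0"
  defines "H \<equiv> \<chi> i j. if i = j then (if i = 3 then lam else 1) else 0"
  shows "diag_rep lam ** H = mat 1" "H ** diag_rep lam = mat 1"
  using assms by (simp_all add: diag_rep_def matrix_matrix_mult_def mat_def vec_eq_iff forall_3 sum_3)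

lemma invertible_diag_rep: "lam > 0 \<Longrightarrow> invertible (diag_rep lam)"
  unfolding invertible_def using diag_rep_inverse by blast

lemma gl_act_diag_rep:
  assumes "lam > 0"
  shows "gl_act (diag_rep lam) ip0 x y = x$1 * y$1 + x$2 * y$2 + lam\<^sup>2 * (x$3 * y$3)"
  using assms matrix_inv_unique[OF diag_rep_inverse[OF assms]]
  by (simp add: gl_act_def ip0_def inner_vec_def sum_3 matrix_vector_mult_def power2_eq_square)

lemma is_inner_prod_gl_act_diag_rep:
  assumes "lam > 0"
  shows "is_inner_prod (gl_act (diag_rep lam) ip0)"
proof -
  have pos: "x$1 * x$1 + x$2 * x$2 + lam\<^sup>2 * (x$3 * x$3) > 0" if "x \<noteq> 0" for x :: "real^3"
  proof -
    have "(x$1 \<noteq> 0 \<or> x$2 \<noteq> 0) \<or> lam * x$3 \<noteq> 0"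
      using that assms by (auto simp: vec_eq_iff forall_3)
    then have "0 < ((x$1)\<^sup>2 + (x$2)\<^sup>2) + (lam * x$3)\<^sup>2"
      by (metis add_nonneg_pos add_pos_nonneg add_nonneg_nonneg sum_power2_gt_zero_iff
          zero_le_power2 zero_less_power2)
    then show ?thesis
      by (simp add: power2_eq_square algebra_simps)
  qed
  have "bilinear (\<lambda>x y::real^3. x$1 * y$1 + x$2 * y$2 + lam\<^sup>2 * (x$3 * y$3))"
    unfolding bilinear_def by (auto intro!: linearI simp: algebra_simps)
  then show ?thesis
    unfolding is_inner_prod_def gl_act_diag_rep[OF assms, abs_def] using pos
    by (auto simp: algebra_simps)
qed

lemma inner_prod_triangular_form:
  assumes "is_inner_prod B"
  obtains d1 d2 d3 m p q where "d1 > 0" "d2 > 0" "d3 > 0"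
    "\<And>x y. B x y = d1 * x$1 * y$1 + d2 * (x$2 + m * x$1) * (y$2 + m * y$1)
        + d3 * (x$3 + p * x$2 + q * x$1) * (y$3 + p * y$2 + q * y$1)"
proof -
  have bl: "bilinear B" and sym: "\<And>x y. B x y = B y x" and pd: "\<And>x. x \<noteq> 0 \<Longrightarrow> B x x > 0"
    using assms by (auto simp: is_inner_prod_def)
  define b where "b i j = B (axis i 1) (axis j 1)" for i j :: 3
  have coeffs: "B x y = x$1*y$1*b 1 1 + (x$1*y$2 + x$2*y$1)*b 1 2 + (x$1*y$3 + x$3*y$1)*b 1 3
     + x$2*y$2*b 2 2 + (x$2*y$3 + x$3*y$2)*b 2 3 + x$3*y$3*b 3 3" for x y
    unfolding b_def using sym[of "axis 2 1" "axis 1 1"] sym[of "axis 3 1" "axis 1 1"]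
      sym[of "axis 3 1" "axis 2 1"]
    by (simp add: bilinear_axis_expansion[OF bl, of x y] sum_3 algebra_simps)
  define d3 where "d3 = b 3 3"
  define p where "p = b 2 3 / d3"
  define q where "q = b 1 3 / d3"
  define d2 where "d2 = b 2 2 - d3 * p\<^sup>2"
  define m where "m = (b 1 2 - d3 * p * q) / d2"
  define d1 where "d1 = b 1 1 - d2 * m\<^sup>2 - d3 * q\<^sup>2"
  \<comment> \<open>Each \<open>d\<^sub>i\<close> is the value of \<open>B\<close> at a nonzero vector once the earlier ones are known positive.\<close>
  have "d3 > 0"
    unfolding d3_def b_def by (rule pd) (simp add: axis_eq_0_iff)
  then have "B (vector [0, 1, -p]) (vector [0, 1, -p]) = d2"
    unfolding coeffs by (simp add: d2_def p_def d3_def field_simps power2_eq_square)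
  then have "d2 > 0"
    using pd[of "vector [0, 1, -p]"] by (simp add: vec_eq_iff forall_3)
  have form: "B x y = d1 * x$1 * y$1 + d2 * (x$2 + m * x$1) * (y$2 + m * y$1)
        + d3 * (x$3 + p * x$2 + q * x$1) * (y$3 + p * y$2 + q * y$1)" for x y
  proof -
    have "b 3 3 = d3" "b 2 3 = d3 * p" "b 1 3 = d3 * q"
      using \<open>d3 > 0\<close> unfolding d3_def p_def q_def by simp_all
    moreover have "b 2 2 = d2 + d3 * p\<^sup>2" "b 1 2 = d2 * m + d3 * p * q"
      "b 1 1 = d1 + d2 * m\<^sup>2 + d3 * q\<^sup>2"
      using \<open>d2 > 0\<close> by (simp_all add: d2_def m_def d1_def)
    ultimately show ?thesis
      unfolding coeffs by (simp add: algebra_simps power2_eq_square)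
  qed
  have "B (vector [1, -m, m * p - q]) (vector [1, -m, m * p - q]) = d1"
    unfolding form by (simp add: algebra_simps)
  then have "d1 > 0"
    using pd[of "vector [1, -m, m * p - q]"] by (simp add: vec_eq_iff forall_3)
  with \<open>d2 > 0\<close> \<open>d3 > 0\<close> form show thesis
    by (intro that)
qed

lemma iso_scale_gl_act_diag_rep:
  assumes "is_inner_prod B"
  obtains lam where "lam > 0" "iso_scale B (gl_act (diag_rep lam) ip0)"
proof -
  obtain d1 d2 d3 m p q where d: "d1 > 0" "d2 > 0" "d3 > 0" and form:
    "\<And>x y. B x y = d1 * x$1 * y$1 + d2 * (x$2 + m * x$1) * (y$2 + m * y$1)
        + d3 * (x$3 + p * x$2 + q * x$1) * (y$3 + p * y$2 + q * y$1)"
    using inner_prod_triangular_form[OF assms] by blast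
  define a where "a = sqrt (d2 / d1)"
  define lam where "lam = sqrt (d3 / d2)"
  have "a > 0" "lam > 0"
    using d by (simp_all add: a_def lam_def)
  have a2: "d1 * a\<^sup>2 = d2" and lam2: "d1 * (lam\<^sup>2 * a\<^sup>2) = d3"
    using d by (simp_all add: a_def lam_def)
  have "B x y = d1 * gl_act (diag_rep lam) ip0 (r3_shear a m p q x) (r3_shear a m p q y)" for x y
    unfolding gl_act_diag_rep[OF \<open>lam > 0\<close>] form r3_shear_def
    by (simp add: algebra_simps a2[symmetric] lam2[symmetric] power2_eq_square)
  moreover have "r3_aut (r3_shear a m p q)"
    using \<open>a > 0\<close> by (simp add: r3_aut_shear)
  ultimately have "iso_scale B (gl_act (diag_rep lam) ip0)"
    unfolding iso_scale_def using d(1) by blast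
  with \<open>lam > 0\<close> show thesis
    by (intro that)
qed

theorem proposition3p8:
  shows "is_set_of_reps U_r3"
proof -
  have "PM \<subseteq> (\<lambda>h. ip_class (gl_act h ip0)) ` U_r3"
  proof
    fix C
    assume "C \<in> PM"
    then obtain B where B: "is_inner_prod B" and C: "C = ip_class B"
      by (auto simp: PM_def)
    obtain lam where "lam > 0" "iso_scale B (gl_act (diag_rep lam) ip0)"
      using iso_scale_gl_act_diag_rep[OF B] .
    then show "C \<in> (\<lambda>h. ip_class (gl_act h ip0)) ` U_r3"
      unfolding C U_r3_eq using ip_class_eq by blast
  qed
  moreover have "(\<lambda>h. ip_class (gl_act h ip0)) ` U_r3 \<subseteq> PM"
    unfolding U_r3_eq PM_def using is_inner_prod_gl_act_diag_rep by blast
  moreover have "U_r3 \<subseteq> {g. invertible g}"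
    unfolding U_r3_eq using invertible_diag_rep by blast
  ultimately show ?thesis
    unfolding is_set_of_reps_def by blast
qed

end
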